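(* Let $Y$ be a topological quandle with the underlying set and quandle operation described below, but with the indiscrete topology. Then $\bar{H}^{1}_{Q}(Y)=\mathbb{Z}^{2}$.
   Context: Setting: For a topological quandle $X$, $C_n(X)$ is the free abelian group generated by the singular $n$-simplices $\sigma:\Delta^n\to X$. We write $\sigma_{[x_1,\dots,x_{n+1}]}$ for a simplex whose $i$-th vertex maps to $x_i$. The boundary map is $\partial_n(\sigma_{[x_1,\dots,x_{n+1}]})=\sum_{i=2}^{n+1}(-1)^i(\sigma_{[x_1,\dots,\hat{x_i},\dots,x_{n+1}]}-\sigma_{[x_1\triangleright x_i,\dots,x_{i-1}\triangleright x_i,\hat{x_i},\dots,x_{n+1}]})$. $\bar{C}^R_n(X)$ is the quotient of $C_n(X)$ that identifies two $n$-simplices whenever they have the same vertices. $\bar{C}^D_n(X)$ is the subcomplex generated by the simplices $\sigma_{[x_1,\dots,x_{n+1}]}$ with $x_i=x_{i+1}$ for some $i$, for $n\ge1$; it is $0$ for $n=0$. Then $\bar{C}^Q_n(X)=\bar{C}^R_n(X)/\bar{C}^D_n(X)$. The group $\bar{H}^n_Q(X)$ is the $n$-th cohomology of $\mathrm{Hom}(\bar{C}^Q_*(X),\mathbb{Z})$. The underlying quandle is $\{1,2,3\}$ with - $1\triangleright j=1$ for all $j$, - $2\triangleright1=3$, $2\triangleright2=2$, $2\triangleright3=2$, - $3\triangleright1=2$, $3\triangleright2=3$, $3\triangleright3=3$. This is the operation table $M$ with rows $(1,1,1),(3,2,2),(2,3,3)$. *)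

theory Defs
  imports "HOL-Homology.Homology" "HOL-Algebra.Elementary_Groups" "HOL-Algebra.Coset"
begin

definition indiscrete_topology :: "'a set \<Rightarrow> 'a topology" where
  "indiscrete_topology S = topology (\<lambda>U. U = {} \<or> U = S)"

definition qop :: "nat \<Rightarrow> nat \<Rightarrow> nat" where
  "qop x y = (if x = 1 then 1
              else if x = 2 then (if y = 1 then 3 else 2)
              else if x = 3 then (if y = 1 then 2 else 3)
              else x)"

definition Y_top :: "nat topology" where
  "Y_top = indiscrete_topology {1,2,3}"

definition simplex_vertex :: "nat \<Rightarrow> (nat \<Rightarrow> real)" where
  "simplex_vertex i = (\<lambda>j. if j = i then 1 else 0)"

definition vertex_tuple :: "nat \<Rightarrow> ((nat \<Rightarrow> real) \<Rightarrow> 'a) \<Rightarrow> 'a list" where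
  "vertex_tuple n \<sigma> = map (\<lambda>i. \<sigma> (simplex_vertex i)) [0..<Suc n]"

text \<open>Basis of the quotient \<open>C^R_n(X)\<close>: the vertex tuples of singular n-simplices
  (simplices with the same vertices are identified).\<close>
definition realized_tuples :: "nat \<Rightarrow> 'a topology \<Rightarrow> 'a list set" where
  "realized_tuples n X = {vertex_tuple n \<sigma> | \<sigma>. singular_simplex n X \<sigma>}"

definition degenerate_tuple :: "'a list \<Rightarrow> bool" where
  "degenerate_tuple t \<longleftrightarrow> (\<exists>i. Suc i < length t \<and> t ! i = t ! Suc i)"

text \<open>Basis of \<open>C^Q_n(X) = C^R_n(X)/C^D_n(X)\<close>.\<close>
definition quandle_basis :: "nat \<Rightarrow> 'a topology \<Rightarrow> 'a list set" where
  "quandle_basis n X = {t \<in> realized_tuples n X. \<not> degenerate_tuple t}"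

text \<open>Faces (0-based index k, corresponding to i = k+1 in the paper).\<close>
definition face_del :: "nat \<Rightarrow> 'a list \<Rightarrow> 'a list" where
  "face_del k t = take k t @ drop (Suc k) t"

definition face_act :: "('a \<Rightarrow> 'a \<Rightarrow> 'a) \<Rightarrow> nat \<Rightarrow> 'a list \<Rightarrow> 'a list" where
  "face_act op k t = map (\<lambda>x. op x (t ! k)) (take k t) @ drop (Suc k) t"

text \<open>Cochain group \<open>Hom(C^Q_n(X), Z)\<close>, represented as integer functions on tuples
  vanishing outside the basis of \<open>C^Q_n(X)\<close>, with pointwise addition.\<close>
definition cochain_group :: "'a topology \<Rightarrow> nat \<Rightarrow> ('a list \<Rightarrow> int) monoid" where
  "cochain_group X n =
     \<lparr>carrier = {f. \<forall>t. t \<notin> quandle_basis n X \<longrightarrow> f t = 0},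
      mult = (\<lambda>f g t. f t + g t), one = (\<lambda>t. 0)\<rparr>"

text \<open>Coboundary \<open>\<delta>^n f = f \<circ> \<partial>_{n+1}\<close>; the paper's sum over i = 2..n+2 with sign (-1)^i.\<close>
definition qcobound :: "('a \<Rightarrow> 'a \<Rightarrow> 'a) \<Rightarrow> 'a topology \<Rightarrow> nat \<Rightarrow> ('a list \<Rightarrow> int) \<Rightarrow> 'a list \<Rightarrow> int" where
  "qcobound op X n f t =
     (if t \<in> quandle_basis (Suc n) X
      then (\<Sum>k\<in>{1..Suc n}. (-1) ^ (Suc k) * (f (face_del k t) - f (face_act op k t)))
      else 0)"

definition cocycles :: "('a \<Rightarrow> 'a \<Rightarrow> 'a) \<Rightarrow> 'a topology \<Rightarrow> nat \<Rightarrow> ('a list \<Rightarrow> int) set" where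
  "cocycles op X n = {f \<in> carrier (cochain_group X n). qcobound op X n f = (\<lambda>t. 0)}"

definition coboundaries :: "('a \<Rightarrow> 'a \<Rightarrow> 'a) \<Rightarrow> 'a topology \<Rightarrow> nat \<Rightarrow> ('a list \<Rightarrow> int) set" where
  "coboundaries op X n =
     (case n of 0 \<Rightarrow> {\<lambda>t. 0}
      | Suc m \<Rightarrow> qcobound op X m ` carrier (cochain_group X m))"

definition quandle_cohomology :: "('a \<Rightarrow> 'a \<Rightarrow> 'a) \<Rightarrow> 'a topology \<Rightarrow> nat \<Rightarrow> ('a list \<Rightarrow> int) set monoid" where
  "quandle_cohomology op X n =
     ((cochain_group X n)\<lparr>carrier := cocycles op X n\<rparr>) Mod (coboundaries op X n)"

end

theory Submission
  imports Defs
begin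

text \<open>Every map into an indiscrete space is continuous, so the basis of \<open>C^Q_n(Y)\<close> consists of
  all non-degenerate tuples of length \<open>n+1\<close> over \<open>{1,2,3}\<close>. Evaluating the coboundary of a
  1-cochain \<open>f\<close> on the twelve non-degenerate triples shows that \<open>f\<close> is a cocycle iff
  \<open>f[2,3] = f[3,2] = 0\<close> and \<open>f[1,2] = f[1,3]\<close>, so the cocycles are free on the values
  \<open>f[1,2], f[2,1], f[3,1]\<close>. The coboundary of a 0-cochain \<open>g\<close> vanishes except at
  \<open>[2,1]\<close> and \<open>[3,1]\<close>, where it takes the values \<open>g[2] - g[3]\<close> and \<open>g[3] - g[2]\<close>. Hence
  \<open>f \<mapsto> (f[1,2], f[2,1] + f[3,1])\<close> maps the cocycles onto \<open>Z^2\<close> with kernel exactly the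
  coboundaries.\<close>

lemma istopology_indiscrete: "istopology (\<lambda>U. U = {} \<or> U = S)"
  unfolding istopology_def
proof (intro conjI allI impI)
  fix \<K> :: "'a set set"
  assume "\<forall>K\<in>\<K>. K = {} \<or> K = S"
  then show "\<Union>\<K> = {} \<or> \<Union>\<K> = S"
    by (cases "S \<in> \<K>") auto
qed auto

lemma openin_indiscrete_topology: "openin (indiscrete_topology S) U \<longleftrightarrow> U = {} \<or> U = S"
  by (simp add: indiscrete_topology_def istopology_indiscrete)

lemma topspace_indiscrete_topology [simp]: "topspace (indiscrete_topology S) = S"
  unfolding topspace_def openin_indiscrete_topology by auto

lemma continuous_map_into_indiscrete_topology:
  "continuous_map X (indiscrete_topology S) f \<longleftrightarrow> f \<in> topspace X \<rightarrow> S"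
proof -
  have "topspace X \<inter> {x. f x \<in> S} = topspace X" if "f \<in> topspace X \<rightarrow> S"
    using that by auto
  then show ?thesis
    by (auto simp: continuous_map_def openin_indiscrete_topology Collect_conj_eq)
qed

lemma simplex_vertex_in_standard_simplex: "i \<le> n \<Longrightarrow> simplex_vertex i \<in> standard_simplex n"
  unfolding simplex_vertex_def standard_simplex_def by auto

lemma vertex_tuple_nth: "i \<le> n \<Longrightarrow> vertex_tuple n \<sigma> ! i = \<sigma> (simplex_vertex i)"
  unfolding vertex_tuple_def by (simp del: upt_Suc)

lemma length_vertex_tuple [simp]: "length (vertex_tuple n \<sigma>) = Suc n"
  by (simp add: vertex_tuple_def)

lemma realized_tuples_subset: "realized_tuples n X \<subseteq> {t. length t = Suc n \<and> set t \<subseteq> topspace X}"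
proof
  fix t assume "t \<in> realized_tuples n X"
  then obtain \<sigma> where t: "t = vertex_tuple n \<sigma>" and "singular_simplex n X \<sigma>"
    by (auto simp: realized_tuples_def)
  then have "\<sigma> (simplex_vertex i) \<in> topspace X" if "i \<le> n" for i
    using that simplex_vertex_in_standard_simplex singular_simplex_def continuous_map_image_subset_topspace
    by fastforce
  then show "t \<in> {t. length t = Suc n \<and> set t \<subseteq> topspace X}"
    by (auto simp: t in_set_conv_nth vertex_tuple_nth)
qed

text \<open>The witness sends a point of the standard simplex to the entry of \<open>t\<close> indexed by its
  first coordinate equal to 1, which puts \<open>t ! i\<close> at the \<open>i\<close>-th vertex.\<close>
lemma singular_simplex_with_vertex_tuple:
  assumes "length t = Suc n" and "set t \<subseteq> S"
  shows "\<exists>\<sigma>. singular_simplex n (indiscrete_topology S) \<sigma> \<and> vertex_tuple n \<sigma> = t"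
proof (intro exI conjI)
  let ?\<sigma> = "restrict (\<lambda>x. t ! min n (LEAST j. x j = 1)) (standard_simplex n)"
  have "t ! min n j \<in> S" for j
    using assms by (simp add: subset_iff)
  then show "singular_simplex n (indiscrete_topology S) ?\<sigma>"
    by (simp add: singular_simplex_def continuous_map_into_indiscrete_topology)
  have "?\<sigma> (simplex_vertex i) = t ! i" if "i \<le> n" for i
  proof -
    have "(LEAST j. simplex_vertex i j = 1) = i"
      by (rule Least_equality) (auto simp: simplex_vertex_def split: if_splits)
    then show ?thesis
      using that by (simp add: simplex_vertex_in_standard_simplex)
  qed
  then show "vertex_tuple n ?\<sigma> = t"
    using assms(1) by (intro nth_equalityI) (simp_all add: vertex_tuple_nth)
qed

lemma realized_tuples_indiscrete_topology:
  "realized_tuples n (indiscrete_topology S) = {t. length t = Suc n \<and> set t \<subseteq> S}"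
proof (rule equalityI)
  show "realized_tuples n (indiscrete_topology S) \<subseteq> {t. length t = Suc n \<and> set t \<subseteq> S}"
    using realized_tuples_subset[of n "indiscrete_topology S"] by simp
  show "{t. length t = Suc n \<and> set t \<subseteq> S} \<subseteq> realized_tuples n (indiscrete_topology S)"
  proof
    fix t assume "t \<in> {t. length t = Suc n \<and> set t \<subseteq> S}"
    then obtain \<sigma> where "singular_simplex n (indiscrete_topology S) \<sigma>" "vertex_tuple n \<sigma> = t"
      using singular_simplex_with_vertex_tuple by blast
    then show "t \<in> realized_tuples n (indiscrete_topology S)"
      unfolding realized_tuples_def by blast
  qed
qed

lemma quandle_basis_indiscrete_topology:
  "quandle_basis n (indiscrete_topology S) =
     {t. length t = Suc n \<and> set t \<subseteq> S \<and> \<not> degenerate_tuple t}"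
  by (auto simp: quandle_basis_def realized_tuples_indiscrete_topology)

lemma degenerate_tuple_simps [simp]:
  "\<not> degenerate_tuple [a]"
  "degenerate_tuple [a, b] \<longleftrightarrow> a = b"
  "degenerate_tuple [a, b, c] \<longleftrightarrow> a = b \<or> b = c"
  by (auto simp: degenerate_tuple_def less_Suc_eq)

lemma quandle_basis_0_Y_top: "quandle_basis 0 Y_top = {[1], [2], [3]}"
  by (auto simp: Y_top_def quandle_basis_indiscrete_topology length_Suc_conv)

lemma quandle_basis_1_Y_top:
  "quandle_basis 1 Y_top = {[1,2], [1,3], [2,1], [2,3], [3,1], [3,2]}"
  by (auto simp: Y_top_def quandle_basis_indiscrete_topology length_Suc_conv)

lemma quandle_basis_2_Y_top:
  "quandle_basis 2 Y_top =
     {[1,2,1], [1,2,3], [1,3,1], [1,3,2], [2,1,2], [2,1,3],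
      [2,3,1], [2,3,2], [3,1,2], [3,1,3], [3,2,1], [3,2,3]}"
proof -
  have basis_iff: "t \<in> quandle_basis 2 Y_top \<longleftrightarrow>
      (\<exists>a b c. t = [a,b,c] \<and> a \<in> {1,2,3} \<and> b \<in> {1,2,3} \<and> c \<in> {1,2,3} \<and> a \<noteq> b \<and> b \<noteq> c)"
    for t
    by (auto simp: Y_top_def quandle_basis_indiscrete_topology length_Suc_conv numeral_2_eq_2)
  show ?thesis
    unfolding set_eq_iff basis_iff by auto
qed

lemma carrier_cochain_group:
  "f \<in> carrier (cochain_group X n) \<longleftrightarrow> (\<forall>t. t \<notin> quandle_basis n X \<longrightarrow> f t = 0)"
  by (simp add: cochain_group_def)

lemma mult_cochain_group: "f \<otimes>\<^bsub>cochain_group X n\<^esub> g = (\<lambda>t. f t + g t)"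
  by (simp add: cochain_group_def)

lemma comm_group_cochain_group: "comm_group (cochain_group X n)"
proof (rule comm_groupI)
  fix f assume "f \<in> carrier (cochain_group X n)"
  then show "\<exists>g\<in>carrier (cochain_group X n). g \<otimes>\<^bsub>cochain_group X n\<^esub> f = \<one>\<^bsub>cochain_group X n\<^esub>"
    by (intro bexI[where x = "\<lambda>t. - f t"]) (auto simp: cochain_group_def)
qed (auto simp: cochain_group_def)

lemma qcobound_outside_quandle_basis:
  "t \<notin> quandle_basis (Suc n) X \<Longrightarrow> qcobound op X n f t = 0"
  by (simp add: qcobound_def)

lemma qcobound_eq_0_iff:
  "qcobound op X n f = (\<lambda>t. 0) \<longleftrightarrow> (\<forall>t\<in>quandle_basis (Suc n) X. qcobound op X n f t = 0)"
  unfolding fun_eq_iff by (metis qcobound_outside_quandle_basis)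

lemma qcobound_in_carrier: "qcobound op X n f \<in> carrier (cochain_group X (Suc n))"
  by (simp add: carrier_cochain_group qcobound_outside_quandle_basis)

lemma qcobound_add:
  "qcobound op X n (\<lambda>t. f t + g t) = (\<lambda>t. qcobound op X n f t + qcobound op X n g t)"
proof -
  have "(-1) ^ Suc k * ((f u + g u) - (f v + g v)) =
      (-1) ^ Suc k * (f u - f v) + (-1) ^ Suc k * (g u - g v)" for k :: nat and u v
    by (simp add: algebra_simps)
  then show ?thesis
    unfolding qcobound_def fun_eq_iff by (simp only: sum.distrib) simp
qed

lemma group_hom_qcobound:
  "group_hom (cochain_group X n) (cochain_group X (Suc n)) (qcobound op X n)"
proof (rule group_hom.intro)
  show "group (cochain_group X n)" "group (cochain_group X (Suc n))"
    using comm_group_cochain_group comm_group.axioms(2) by blast+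
  show "group_hom_axioms (cochain_group X n) (cochain_group X (Suc n)) (qcobound op X n)"
    by (simp add: group_hom_axioms_def hom_def mult_cochain_group qcobound_in_carrier qcobound_add)
qed

lemma cocycles_eq_kernel:
  "cocycles op X n = kernel (cochain_group X n) (cochain_group X (Suc n)) (qcobound op X n)"
  by (simp add: cocycles_def kernel_def cochain_group_def)

lemma group_cocycles: "group ((cochain_group X n)\<lparr>carrier := cocycles op X n\<rparr>)"
  unfolding cocycles_eq_kernel
  by (intro subgroup.subgroup_is_group group_hom.subgroup_kernel group_hom_qcobound)
    (use comm_group_cochain_group comm_group.axioms(2) in blast)

lemma qcobound_0:
  "qcobound op X 0 g [a, b] = (if [a, b] \<in> quandle_basis 1 X then g [a] - g [op a b] else 0)"
  by (simp add: qcobound_def face_del_def face_act_def)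

lemma qcobound_1:
  "qcobound op X 1 f [a, b, c] =
     (if [a, b, c] \<in> quandle_basis 2 X
      then f [a, c] - f [op a b, c] - f [a, b] + f [op a c, op b c] else 0)"
proof -
  have "{1..Suc 1} = {1::nat, 2}"
    by auto
  then show ?thesis
    by (simp add: qcobound_def face_del_def face_act_def numeral_2_eq_2)
qed

lemma cocycles_1_Y_top:
  "f \<in> cocycles qop Y_top 1 \<longleftrightarrow>
     f \<in> carrier (cochain_group Y_top 1) \<and> f [2,3] = 0 \<and> f [3,2] = 0 \<and> f [1,2] = f [1,3]"
proof (cases "f \<in> carrier (cochain_group Y_top 1)")
  case True
  \<comment> \<open>\<open>One_nat_def\<close> is a simp rule turning \<open>1\<close> into \<open>Suc 0\<close>, after which the lemmas about
    \<open>quandle_basis 1\<close> and \<open>qcobound op X 1\<close> no longer match; hence the unfoldings and \<open>simp del\<close>.\<close>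
  then have "f [1,1] = 0" "f [2,2] = 0" "f [3,3] = 0"
    unfolding carrier_cochain_group quandle_basis_1_Y_top by auto
  then have "qcobound qop Y_top 1 f = (\<lambda>t. 0) \<longleftrightarrow> f [2,3] = 0 \<and> f [3,2] = 0 \<and> f [1,2] = f [1,3]"
    unfolding qcobound_eq_0_iff Suc_1 quandle_basis_2_Y_top
    by (auto simp del: One_nat_def simp add: qcobound_1 quandle_basis_2_Y_top qop_def)
  with True show ?thesis
    by (simp add: cocycles_def)
qed (simp add: cocycles_def)

lemma coboundaries_1_Y_top:
  "f \<in> coboundaries qop Y_top 1 \<longleftrightarrow>
     f \<in> carrier (cochain_group Y_top 1) \<and> f [1,2] = 0 \<and> f [1,3] = 0 \<and> f [2,3] = 0 \<and>
     f [3,2] = 0 \<and> f [2,1] + f [3,1] = 0"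
proof
  assume "f \<in> coboundaries qop Y_top 1"
  then obtain g where f: "f = qcobound qop Y_top 0 g"
    by (auto simp: coboundaries_def)
  have "f \<in> carrier (cochain_group Y_top 1)"
    using qcobound_in_carrier[of qop Y_top 0 g] by (simp add: f)
  then show "f \<in> carrier (cochain_group Y_top 1) \<and> f [1,2] = 0 \<and> f [1,3] = 0 \<and> f [2,3] = 0 \<and>
      f [3,2] = 0 \<and> f [2,1] + f [3,1] = 0"
    unfolding f qcobound_0 quandle_basis_1_Y_top by (simp add: qop_def)
next
  assume f: "f \<in> carrier (cochain_group Y_top 1) \<and> f [1,2] = 0 \<and> f [1,3] = 0 \<and> f [2,3] = 0 \<and>
      f [3,2] = 0 \<and> f [2,1] + f [3,1] = 0"
  define g where "g t = (if t = [2] then f [2,1] else 0)" for t :: "nat list"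
  have "g \<in> carrier (cochain_group Y_top 0)"
    unfolding carrier_cochain_group quandle_basis_0_Y_top by (simp add: g_def)
  moreover have "qcobound qop Y_top 0 g = f"
  proof
    fix t
    show "qcobound qop Y_top 0 g t = f t"
    proof (cases "t \<in> quandle_basis 1 Y_top")
      case True
      then show ?thesis
        using f by (auto simp del: One_nat_def simp add: quandle_basis_1_Y_top qcobound_0 g_def qop_def)
    next
      case False
      then show ?thesis
        using f qcobound_outside_quandle_basis[of t 0] unfolding carrier_cochain_group by simp
    qed
  qed
  ultimately show "f \<in> coboundaries qop Y_top 1"
    by (auto simp: coboundaries_def)
qed

definition cocycle_coordinates :: "(nat list \<Rightarrow> int) \<Rightarrow> int \<times> int" where
  "cocycle_coordinates f = (f [1,2], f [2,1] + f [3,1])"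

lemma group_hom_cocycle_coordinates:
  "group_hom ((cochain_group Y_top 1)\<lparr>carrier := cocycles qop Y_top 1\<rparr>)
     (DirProd integer_group integer_group) cocycle_coordinates"
proof (rule group_hom.intro)
  show "group ((cochain_group Y_top 1)\<lparr>carrier := cocycles qop Y_top 1\<rparr>)"
    by (rule group_cocycles)
  show "group (DirProd integer_group integer_group)"
    by (simp add: DirProd_group)
  show "group_hom_axioms ((cochain_group Y_top 1)\<lparr>carrier := cocycles qop Y_top 1\<rparr>)
      (DirProd integer_group integer_group) cocycle_coordinates"
    by (simp add: group_hom_axioms_def hom_def mult_cochain_group cocycle_coordinates_def
        integer_group_def)
qed

lemma cocycle_coordinates_surj: "cocycle_coordinates ` cocycles qop Y_top 1 = UNIV"
proof -
  have "(m, k) \<in> cocycle_coordinates ` cocycles qop Y_top 1" for m k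
  proof
    define f where "f t = (if t = [1,2] \<or> t = [1,3] then m else if t = [2,1] then k else 0)"
      for t :: "nat list"
    show "(m, k) = cocycle_coordinates f"
      by (simp add: cocycle_coordinates_def f_def)
    show "f \<in> cocycles qop Y_top 1"
      unfolding cocycles_1_Y_top carrier_cochain_group quandle_basis_1_Y_top by (simp add: f_def)
  qed
  then show ?thesis
    by auto
qed

lemma kernel_cocycle_coordinates:
  "kernel ((cochain_group Y_top 1)\<lparr>carrier := cocycles qop Y_top 1\<rparr>)
     (DirProd integer_group integer_group) cocycle_coordinates = coboundaries qop Y_top 1"
proof -
  have "kernel ((cochain_group Y_top 1)\<lparr>carrier := cocycles qop Y_top 1\<rparr>)
      (DirProd integer_group integer_group) cocycle_coordinates =
      {f \<in> cocycles qop Y_top 1. cocycle_coordinates f = (0, 0)}"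
    by (simp add: kernel_def integer_group_def)
  also have "\<dots> = coboundaries qop Y_top 1"
    unfolding set_eq_iff mem_Collect_eq cocycles_1_Y_top coboundaries_1_Y_top cocycle_coordinates_def
    by auto
  finally show ?thesis .
qed

theorem mainTheorem16:
  shows "quandle_cohomology qop Y_top 1 \<cong> DirProd integer_group integer_group"
proof -
  let ?Z = "(cochain_group Y_top 1)\<lparr>carrier := cocycles qop Y_top 1\<rparr>"
  have "quandle_cohomology qop Y_top 1 =
      ?Z Mod kernel ?Z (DirProd integer_group integer_group) cocycle_coordinates"
    unfolding quandle_cohomology_def kernel_cocycle_coordinates ..
  moreover have "cocycle_coordinates ` carrier ?Z = carrier (DirProd integer_group integer_group)"
    using cocycle_coordinates_surj by (simp add: integer_group_def)
  ultimately show ?thesis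
    using group_hom.FactGroup_iso[OF group_hom_cocycle_coordinates] by simp
qed

end
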